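(* For every Tychonoff space $X$, the free locally convex space $L(X)$ is DLP (hence also NP and tame).
   Context: The free locally convex space $L(X)$ over a Tychonoff space $X$ is the locally convex space containing $X$ as a (linearly independent, Hamel basis) topological subspace such that every continuous map from $X$ to a locally convex space extends uniquely to a continuous linear map on $L(X)$. A family $F$ of real functions on a set $K$ has DLP if for all sequences $(f_n)\subseteq F$, $(x_m)\subseteq K$, $\lim_n\lim_m f_n(x_m)=\lim_m\lim_n f_n(x_m)$ whenever both exist. A locally convex space $E$ is DLP if for every bounded $B\subseteq E$ and every equicontinuous weak-star compact $M\subseteq E^*$, the family $\{\varphi\mapsto\varphi(b)\}_{b\in B}$ on $M$ has DLP. *)

theory Defs
  imports "HOL-Analysis.Analysis"
begin

definition Tychonoff_space :: "'a topology \<Rightarrow> bool" where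
  "Tychonoff_space X \<longleftrightarrow> completely_regular_space X \<and> Hausdorff_space X"

text \<open>The underlying vector space of L(X): finitely supported real functions on the
  points of X (formal finite linear combinations of points of X), with pointwise
  operations. The point x of X is identified with the Dirac function Ldelta x.\<close>

definition Lcarrier :: "'a topology \<Rightarrow> ('a \<Rightarrow> real) set" where
  "Lcarrier X = {f. finite {x. f x \<noteq> 0} \<and> {x. f x \<noteq> 0} \<subseteq> topspace X}"

definition Ldelta :: "'a \<Rightarrow> 'a \<Rightarrow> real" where
  "Ldelta x = (\<lambda>y. if y = x then 1 else 0)"

definition vadd :: "('a \<Rightarrow> real) \<Rightarrow> ('a \<Rightarrow> real) \<Rightarrow> 'a \<Rightarrow> real" where
  "vadd f g = (\<lambda>y. f y + g y)"

definition vsub :: "('a \<Rightarrow> real) \<Rightarrow> ('a \<Rightarrow> real) \<Rightarrow> 'a \<Rightarrow> real" where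
  "vsub f g = (\<lambda>y. f y - g y)"

definition vscale :: "real \<Rightarrow> ('a \<Rightarrow> real) \<Rightarrow> 'a \<Rightarrow> real" where
  "vscale c f = (\<lambda>y. c * f y)"

definition vzero :: "'a \<Rightarrow> real" where
  "vzero = (\<lambda>y. 0)"

definition seminorm_on :: "('a \<Rightarrow> real) set \<Rightarrow> (('a \<Rightarrow> real) \<Rightarrow> real) \<Rightarrow> bool" where
  "seminorm_on V p \<longleftrightarrow>
     (\<forall>v\<in>V. 0 \<le> p v) \<and>
     (\<forall>c. \<forall>v\<in>V. p (vscale c v) = \<bar>c\<bar> * p v) \<and>
     (\<forall>v\<in>V. \<forall>w\<in>V. p (vadd v w) \<le> p v + p w)"

definition seminorm_topology ::
    "('a \<Rightarrow> real) set \<Rightarrow> (('a \<Rightarrow> real) \<Rightarrow> real) set \<Rightarrow> ('a \<Rightarrow> real) topology" where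
  "seminorm_topology V P = topology (\<lambda>U. U \<subseteq> V \<and>
     (\<forall>v\<in>U. \<exists>F e. finite F \<and> F \<subseteq> P \<and> 0 < e \<and>
        {w\<in>V. \<forall>p\<in>F. p (vsub w v) < e} \<subseteq> U))"

text \<open>The topology of the free locally convex space is the locally convex
  topology generated by all admissible seminorms, i.e. the finest locally convex topology
  making the canonical map continuous (this is the universal property).\<close>

definition admissible_seminorm :: "'a topology \<Rightarrow> (('a \<Rightarrow> real) \<Rightarrow> real) \<Rightarrow> bool" where
  "admissible_seminorm X p \<longleftrightarrow> seminorm_on (Lcarrier X) p \<and>
     (\<forall>x\<in>topspace X. \<forall>e>0. \<exists>U. openin X U \<and> x \<in> U \<and>
        (\<forall>y\<in>U. p (vsub (Ldelta y) (Ldelta x)) < e))"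

definition Ltop :: "'a topology \<Rightarrow> ('a \<Rightarrow> real) topology" where
  "Ltop X = seminorm_topology (Lcarrier X) {p. admissible_seminorm X p}"

definition DLP_family :: "('k \<Rightarrow> real) set \<Rightarrow> 'k set \<Rightarrow> bool" where
  "DLP_family F K \<longleftrightarrow>
     (\<forall>(f :: nat \<Rightarrow> 'k \<Rightarrow> real) (x :: nat \<Rightarrow> 'k) (a :: nat \<Rightarrow> real) A (b :: nat \<Rightarrow> real) B.
        (\<forall>n. f n \<in> F) \<and> (\<forall>m. x m \<in> K) \<and>
        (\<forall>n. (\<lambda>m. f n (x m)) \<longlonglongrightarrow> a n) \<and> a \<longlonglongrightarrow> A \<and>
        (\<forall>m. (\<lambda>n. f n (x m)) \<longlonglongrightarrow> b m) \<and> b \<longlonglongrightarrow> B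
        \<longrightarrow> A = B)"

text \<open>Notions for a locally convex space E whose underlying vector space is V (a linear
  subspace of 'a \<Rightarrow> real with pointwise operations) and whose topology is T.\<close>

definition bounded_in :: "('a \<Rightarrow> real) topology \<Rightarrow> ('a \<Rightarrow> real) set \<Rightarrow> bool" where
  "bounded_in T B \<longleftrightarrow> B \<subseteq> topspace T \<and>
     (\<forall>U. openin T U \<and> vzero \<in> U \<longrightarrow>
        (\<exists>s>0. \<forall>t>s. \<forall>b\<in>B. vscale (1 / t) b \<in> U))"

text \<open>The continuous dual E*; functionals are represented as extensional functions on the
  carrier, so that E* sits inside the product space with the pointwise topology.\<close>
definition cdual :: "('a \<Rightarrow> real) topology \<Rightarrow> (('a \<Rightarrow> real) \<Rightarrow> real) set" where
  "cdual T = {\<phi>. \<phi> \<in> extensional (topspace T) \<and>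
     (\<forall>v\<in>topspace T. \<forall>w\<in>topspace T. \<phi> (vadd v w) = \<phi> v + \<phi> w) \<and>
     (\<forall>c. \<forall>v\<in>topspace T. \<phi> (vscale c v) = c * \<phi> v) \<and>
     continuous_map T euclideanreal \<phi>}"

definition weak_star_top :: "('a \<Rightarrow> real) topology \<Rightarrow> (('a \<Rightarrow> real) \<Rightarrow> real) topology" where
  "weak_star_top T = subtopology (product_topology (\<lambda>_. euclideanreal) (topspace T)) (cdual T)"

definition equicontinuous_on :: "('a \<Rightarrow> real) topology \<Rightarrow> (('a \<Rightarrow> real) \<Rightarrow> real) set \<Rightarrow> bool" where
  "equicontinuous_on T M \<longleftrightarrow>
     (\<forall>v\<in>topspace T. \<forall>e>0. \<exists>U. openin T U \<and> v \<in> U \<and>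
        (\<forall>\<phi>\<in>M. \<forall>w\<in>U. \<bar>\<phi> w - \<phi> v\<bar> < e))"

definition DLP_space :: "('a \<Rightarrow> real) topology \<Rightarrow> bool" where
  "DLP_space T \<longleftrightarrow>
     (\<forall>B M. bounded_in T B \<and> M \<subseteq> cdual T \<and> equicontinuous_on T M \<and>
        compactin (weak_star_top T) M
        \<longrightarrow> DLP_family ((\<lambda>b. \<lambda>\<phi>. \<phi> b) ` B) M)"

end

theory Submission
  imports Defs "HOL-Library.Diagonal_Subsequence"
begin

text \<open>Let \<open>M\<close> be equicontinuous, so that it is dominated by one admissible seminorm \<open>q\<close>,
  and let \<open>\<phi>\<^sub>m \<in> M\<close>, \<open>b\<^sub>n\<close> in a bounded set. Each \<open>\<phi>\<^sub>m\<close> is the pairing with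
  \<open>f\<^sub>m(x) = \<phi>\<^sub>m(\<delta>\<^sub>x)\<close>, and the \<open>f\<^sub>m\<close> are 1-Lipschitz for the pseudometric
  \<open>D(x,y) = q(\<delta>\<^sub>y - \<delta>\<^sub>x)\<close> and pointwise bounded. A diagonal subsequence \<open>f\<^sub>\<sigma>\<^sub>k\<close>
  converges on the countable union \<open>S\<close> of the supports of the \<open>b\<^sub>n\<close>; it suffices that then
  \<open>\<phi>\<^sub>\<sigma>\<^sub>k(b\<^sub>n)\<close> is Cauchy uniformly in \<open>n\<close>, since this lets the two iterated limits be
  interchanged.

  If not, there are differences \<open>u\<^sub>j = f\<^sub>\<sigma>\<^sub>k - f\<^sub>\<sigma>\<^sub>k\<^sub>'\<close> with \<open>k, k' \<ge> j\<close>,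
  tending to 0 on \<open>S\<close>, and \<open>|\<langle>u\<^sub>j, b\<^sub>n\<^sub>j\<rangle>| \<ge> \<eta>\<close>. Truncating \<open>u\<^sub>j\<close> at a small
  level \<open>\<theta>\<close> gives a function that is \<open>\<surd>D\<close>-Hoelder with small constant; the sup of the pairing
  over such functions is an admissible seminorm, hence bounded on the \<open>b\<^sub>n\<close>, so the truncation
  error is below \<open>\<eta>/2\<close>. The excess \<open>u\<^sub>j - clip\<^sub>\<theta> u\<^sub>j\<close>, cut off by a bump which is 1
  on the support of \<open>b\<^sub>n\<^sub>j\<close> and vanishes away from \<open>S\<close>, yields functions \<open>\<psi>\<^sub>j\<close> that
  vanish for large \<open>j\<close> near every point. Hence \<open>{j \<psi>\<^sub>j}\<close> is pointwise bounded and
  equicontinuous, its sup seminorm is admissible, and yet it is at least \<open>j \<eta>/2\<close> on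
  \<open>b\<^sub>n\<^sub>j\<close>: this contradicts the boundedness of the \<open>b\<^sub>n\<close>.\<close>

abbreviation supp :: "('a \<Rightarrow> real) \<Rightarrow> 'a set" where
  "supp w \<equiv> {y. w y \<noteq> 0}"

lemma Ldelta_in_Lcarrier: "x \<in> topspace X \<Longrightarrow> Ldelta x \<in> Lcarrier X"
  by (auto simp: Lcarrier_def Ldelta_def)

lemma vzero_in_Lcarrier: "vzero \<in> Lcarrier X"
  by (auto simp: Lcarrier_def vzero_def)

lemma Lcarrier_subset:
  assumes "w \<in> Lcarrier X" "supp v \<subseteq> supp w"
  shows "v \<in> Lcarrier X"
  using assms unfolding Lcarrier_def by (auto intro: finite_subset)

lemma vsub_in_Lcarrier:
  assumes "v \<in> Lcarrier X" "w \<in> Lcarrier X"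
  shows "vsub v w \<in> Lcarrier X"
proof -
  have "supp (vsub v w) \<subseteq> supp v \<union> supp w"
    by (auto simp: vsub_def)
  thus ?thesis using assms unfolding Lcarrier_def by (auto intro: finite_subset)
qed

lemma vscale_in_Lcarrier: "w \<in> Lcarrier X \<Longrightarrow> vscale c w \<in> Lcarrier X"
  by (rule Lcarrier_subset) (auto simp: vscale_def)

lemma finite_supp_Lcarrier: "w \<in> Lcarrier X \<Longrightarrow> finite (supp w)"
  by (auto simp: Lcarrier_def)

lemma supp_Lcarrier_subset: "w \<in> Lcarrier X \<Longrightarrow> supp w \<subseteq> topspace X"
  by (auto simp: Lcarrier_def)

lemma vsub_eq_vadd_vscale: "vsub v w = vadd v (vscale (-1) w)"
  by (auto simp: vsub_def vadd_def vscale_def)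

lemma vscale_zero: "vscale 0 w = vzero"
  by (auto simp: vscale_def vzero_def)

lemma vsub_vzero: "vsub w vzero = w"
  by (auto simp: vsub_def vzero_def)

lemma seminorm_on_vzero: "seminorm_on V p \<Longrightarrow> w \<in> V \<Longrightarrow> p vzero = 0"
  unfolding seminorm_on_def by (metis abs_zero mult_zero_left vscale_zero)

lemma seminorm_on_vsub_commute:
  assumes "seminorm_on (Lcarrier X) p" "v \<in> Lcarrier X" "w \<in> Lcarrier X"
  shows "p (vsub v w) = p (vsub w v)"
proof -
  have "vsub v w = vscale (-1) (vsub w v)"
    by (auto simp: vsub_def vscale_def)
  thus ?thesis
    using assms vsub_in_Lcarrier unfolding seminorm_on_def by (metis abs_neg_one mult_1)
qed

lemma seminorm_on_vsub_triangle:
  assumes "seminorm_on (Lcarrier X) p" "u \<in> Lcarrier X" "v \<in> Lcarrier X" "w \<in> Lcarrier X"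
  shows "p (vsub u w) \<le> p (vsub u v) + p (vsub v w)"
proof -
  have "vsub u w = vadd (vsub u v) (vsub v w)"
    by (auto simp: vsub_def vadd_def)
  thus ?thesis using assms vsub_in_Lcarrier unfolding seminorm_on_def by metis
qed

lemma seminorm_on_le_vsub:
  assumes "seminorm_on (Lcarrier X) p" "v \<in> Lcarrier X" "w \<in> Lcarrier X"
  shows "p w \<le> p (vsub w v) + p v"
proof -
  have "w = vadd (vsub w v) v"
    by (auto simp: vsub_def vadd_def)
  thus ?thesis using assms vsub_in_Lcarrier unfolding seminorm_on_def by metis
qed

definition seminorm_open ::
    "('a \<Rightarrow> real) set \<Rightarrow> (('a \<Rightarrow> real) \<Rightarrow> real) set \<Rightarrow> ('a \<Rightarrow> real) set \<Rightarrow> bool" where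
  "seminorm_open V P U \<longleftrightarrow> U \<subseteq> V \<and>
     (\<forall>v\<in>U. \<exists>F e. finite F \<and> F \<subseteq> P \<and> 0 < e \<and>
        {w\<in>V. \<forall>p\<in>F. p (vsub w v) < e} \<subseteq> U)"

lemma seminorm_open_Int:
  assumes S: "seminorm_open V P S" and T: "seminorm_open V P T"
  shows "seminorm_open V P (S \<inter> T)"
  unfolding seminorm_open_def
proof (intro conjI ballI)
  show "S \<inter> T \<subseteq> V" using S unfolding seminorm_open_def by blast
next
  fix v assume v: "v \<in> S \<inter> T"
  obtain F1 e1 where 1: "finite F1" "F1 \<subseteq> P" "0 < e1" "{w\<in>V. \<forall>p\<in>F1. p (vsub w v) < e1} \<subseteq> S"
    using S v unfolding seminorm_open_def by blast
  obtain F2 e2 where 2: "finite F2" "F2 \<subseteq> P" "0 < e2" "{w\<in>V. \<forall>p\<in>F2. p (vsub w v) < e2} \<subseteq> T"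
    using T v unfolding seminorm_open_def by blast
  have "{w\<in>V. \<forall>p\<in>F1 \<union> F2. p (vsub w v) < min e1 e2} \<subseteq> {w\<in>V. \<forall>p\<in>F1. p (vsub w v) < e1}"
       "{w\<in>V. \<forall>p\<in>F1 \<union> F2. p (vsub w v) < min e1 e2} \<subseteq> {w\<in>V. \<forall>p\<in>F2. p (vsub w v) < e2}"
    by (auto simp: min_less_iff_conj)
  with 1(4) 2(4) have "{w\<in>V. \<forall>p\<in>F1 \<union> F2. p (vsub w v) < min e1 e2} \<subseteq> S \<inter> T"
    by blast
  with 1 2 show "\<exists>F e. finite F \<and> F \<subseteq> P \<and> 0 < e \<and> {w\<in>V. \<forall>p\<in>F. p (vsub w v) < e} \<subseteq> S \<inter> T"
    by (intro exI[of _ "F1 \<union> F2"] exI[of _ "min e1 e2"]) simp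
qed

lemma seminorm_open_Union:
  assumes K: "\<And>S. S \<in> K \<Longrightarrow> seminorm_open V P S"
  shows "seminorm_open V P (\<Union>K)"
  unfolding seminorm_open_def
proof (intro conjI ballI)
  show "\<Union>K \<subseteq> V" using K unfolding seminorm_open_def by (meson Union_least)
next
  fix v assume "v \<in> \<Union>K"
  then obtain S where S: "S \<in> K" "v \<in> S" by blast
  obtain F e where "finite F" "F \<subseteq> P" "0 < e" "{w\<in>V. \<forall>p\<in>F. p (vsub w v) < e} \<subseteq> S"
    using K[OF S(1)] S(2) unfolding seminorm_open_def by blast
  with S(1) show "\<exists>F e. finite F \<and> F \<subseteq> P \<and> 0 < e \<and> {w\<in>V. \<forall>p\<in>F. p (vsub w v) < e} \<subseteq> \<Union>K"
    by (intro exI[of _ F] exI[of _ e]) auto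
qed

lemma openin_seminorm_topology:
  "openin (seminorm_topology V P) U \<longleftrightarrow> seminorm_open V P U"
proof -
  have "istopology (seminorm_open V P)"
    unfolding istopology_def using seminorm_open_Int seminorm_open_Union by blast
  moreover have "seminorm_topology V P = topology (seminorm_open V P)"
    unfolding seminorm_topology_def seminorm_open_def ..
  ultimately show ?thesis by simp
qed

lemma topspace_seminorm_topology: "topspace (seminorm_topology V P) = V"
proof -
  have "openin (seminorm_topology V P) V"
    unfolding openin_seminorm_topology seminorm_open_def by (auto intro!: exI[of _ "{}"] exI[of _ 1])
  moreover have "U \<subseteq> V" if "openin (seminorm_topology V P) U" for U
    using that unfolding openin_seminorm_topology seminorm_open_def by blast
  ultimately show ?thesis
    by (metis openin_subset openin_topspace subset_antisym)
qed

lemma topspace_Ltop: "topspace (Ltop X) = Lcarrier X"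
  unfolding Ltop_def by (rule topspace_seminorm_topology)

lemma openin_Ltop_seminorm_ball:
  assumes "admissible_seminorm X p" "0 < r"
  shows "openin (Ltop X) {w \<in> Lcarrier X. p w < r}"
  unfolding Ltop_def openin_seminorm_topology seminorm_open_def
proof (intro conjI ballI)
  fix v assume v: "v \<in> {w \<in> Lcarrier X. p w < r}"
  have sn: "seminorm_on (Lcarrier X) p"
    using assms admissible_seminorm_def by blast
  show "\<exists>F e. finite F \<and> F \<subseteq> {p. admissible_seminorm X p} \<and> 0 < e \<and>
        {w \<in> Lcarrier X. \<forall>p\<in>F. p (vsub w v) < e} \<subseteq> {w \<in> Lcarrier X. p w < r}"
    using v assms seminorm_on_le_vsub[OF sn]
    by (intro exI[of _ "{p}"] exI[of _ "r - p v"]) fastforce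
qed auto

lemma bounded_in_Ltop_imp_seminorm_bounded:
  assumes "bounded_in (Ltop X) B" "admissible_seminorm X p"
  shows "\<exists>R. \<forall>b\<in>B. p b \<le> R"
proof -
  have sn: "seminorm_on (Lcarrier X) p"
    using assms(2) admissible_seminorm_def by blast
  let ?U = "{w \<in> Lcarrier X. p w < 1}"
  have "openin (Ltop X) ?U"
    using openin_Ltop_seminorm_ball[OF assms(2)] by simp
  moreover have "vzero \<in> ?U"
    using seminorm_on_vzero[OF sn vzero_in_Lcarrier] vzero_in_Lcarrier by simp
  ultimately obtain s where s: "s > 0" "\<forall>t>s. \<forall>b\<in>B. vscale (1 / t) b \<in> ?U"
    using assms(1) unfolding bounded_in_def by blast
  have B: "B \<subseteq> Lcarrier X"
    using assms(1) unfolding bounded_in_def topspace_Ltop by blast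
  have "p b \<le> s + 1" if b: "b \<in> B" for b
  proof -
    have "p (vscale (1 / (s+1)) b) = p b / (s+1)"
      using sn b B s(1) unfolding seminorm_on_def by auto
    moreover have "p (vscale (1 / (s+1)) b) < 1"
      using s b by auto
    ultimately show ?thesis
      using s(1) by (simp add: divide_less_eq)
  qed
  thus ?thesis by blast
qed

lemma admissible_seminorm_zero: "admissible_seminorm X (\<lambda>w. 0)"
  unfolding admissible_seminorm_def seminorm_on_def
  by (metis abs_ge_zero add_0 less_eq_real_def mult_zero_right openin_topspace)

lemma admissible_seminorm_add:
  assumes "admissible_seminorm X p1" "admissible_seminorm X p2"
  shows "admissible_seminorm X (\<lambda>w. p1 w + p2 w)"
proof -
  have s1: "seminorm_on (Lcarrier X) p1" and s2: "seminorm_on (Lcarrier X) p2"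
    using assms admissible_seminorm_def by blast+
  have "seminorm_on (Lcarrier X) (\<lambda>w. p1 w + p2 w)"
    unfolding seminorm_on_def
  proof (intro conjI ballI allI)
    fix v assume v: "v \<in> Lcarrier X"
    show "0 \<le> p1 v + p2 v"
      using s1 s2 v unfolding seminorm_on_def by (meson add_nonneg_nonneg)
    fix c show "p1 (vscale c v) + p2 (vscale c v) = \<bar>c\<bar> * (p1 v + p2 v)"
      using s1 s2 v unfolding seminorm_on_def by (simp add: distrib_left)
  next
    fix v w assume "v \<in> Lcarrier X" "w \<in> Lcarrier X"
    hence "p1 (vadd v w) \<le> p1 v + p1 w" "p2 (vadd v w) \<le> p2 v + p2 w"
      using s1 s2 unfolding seminorm_on_def by blast+
    thus "p1 (vadd v w) + p2 (vadd v w) \<le> p1 v + p2 v + (p1 w + p2 w)" by linarith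
  qed
  moreover have "\<exists>U. openin X U \<and> x \<in> U \<and>
      (\<forall>y\<in>U. p1 (vsub (Ldelta y) (Ldelta x)) + p2 (vsub (Ldelta y) (Ldelta x)) < e)"
    if x: "x \<in> topspace X" and e: "e > 0" for x e
  proof -
    obtain U1 where U1: "openin X U1" "x \<in> U1" "\<forall>y\<in>U1. p1 (vsub (Ldelta y) (Ldelta x)) < e/2"
      using assms(1) x e unfolding admissible_seminorm_def by (meson half_gt_zero)
    obtain U2 where U2: "openin X U2" "x \<in> U2" "\<forall>y\<in>U2. p2 (vsub (Ldelta y) (Ldelta x)) < e/2"
      using assms(2) x e unfolding admissible_seminorm_def by (meson half_gt_zero)
    show ?thesis
      using U1 U2 by (intro exI[of _ "U1 \<inter> U2"]) (auto intro: openin_Int, smt (verit))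
  qed
  ultimately show ?thesis
    unfolding admissible_seminorm_def by blast
qed

lemma admissible_seminorm_scale:
  assumes "admissible_seminorm X p" "c \<ge> 0"
  shows "admissible_seminorm X (\<lambda>w. c * p w)"
proof -
  have s: "seminorm_on (Lcarrier X) p"
    using assms admissible_seminorm_def by blast
  have "seminorm_on (Lcarrier X) (\<lambda>w. c * p w)"
    unfolding seminorm_on_def
  proof (intro conjI ballI allI)
    fix v assume v: "v \<in> Lcarrier X"
    show "0 \<le> c * p v"
      using s v assms(2) unfolding seminorm_on_def by simp
    fix d show "c * p (vscale d v) = \<bar>d\<bar> * (c * p v)"
      using s v unfolding seminorm_on_def by simp
  next
    fix v w assume "v \<in> Lcarrier X" "w \<in> Lcarrier X"
    hence "p (vadd v w) \<le> p v + p w"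
      using s unfolding seminorm_on_def by blast
    thus "c * p (vadd v w) \<le> c * p v + c * p w"
      using assms(2) by (metis distrib_left mult_left_mono)
  qed
  moreover have "\<exists>U. openin X U \<and> x \<in> U \<and> (\<forall>y\<in>U. c * p (vsub (Ldelta y) (Ldelta x)) < e)"
    if x: "x \<in> topspace X" and e: "e > 0" for x e
  proof -
    have "e/(c+1) > 0" using e assms(2) by simp
    then obtain U where U: "openin X U" "x \<in> U" "\<forall>y\<in>U. p (vsub (Ldelta y) (Ldelta x)) < e/(c+1)"
      using assms(1) x unfolding admissible_seminorm_def by meson
    have "c * p (vsub (Ldelta y) (Ldelta x)) < e" if y: "y \<in> U" for y
    proof -
      have "c * p (vsub (Ldelta y) (Ldelta x)) \<le> c * (e/(c+1))"
        using U(3) y assms(2) by (meson less_imp_le mult_left_mono)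
      also have "\<dots> < e"
        using e assms(2) by (simp add: field_simps)
      finally show ?thesis .
    qed
    thus ?thesis using U by blast
  qed
  ultimately show ?thesis
    unfolding admissible_seminorm_def by blast
qed

lemma admissible_seminorm_sum:
  assumes "finite F" "\<forall>p\<in>F. admissible_seminorm X p"
  shows "admissible_seminorm X (\<lambda>w. \<Sum>p\<in>F. p w)"
  using assms
proof (induction F rule: finite_induct)
  case empty
  thus ?case using admissible_seminorm_zero by simp
next
  case (insert p F)
  thus ?case using admissible_seminorm_add[of X p "\<lambda>w. \<Sum>p\<in>F. p w"] by simp
qed

lemma cdual_Ltop_linear:
  assumes "\<phi> \<in> cdual (Ltop X)"
  shows "\<forall>v\<in>Lcarrier X. \<forall>w\<in>Lcarrier X. \<phi> (vadd v w) = \<phi> v + \<phi> w"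
    and "\<forall>c. \<forall>v\<in>Lcarrier X. \<phi> (vscale c v) = c * \<phi> v"
  using assms unfolding cdual_def topspace_Ltop by simp_all

lemma cdual_Ltop_vzero: "\<phi> \<in> cdual (Ltop X) \<Longrightarrow> \<phi> vzero = 0"
  using cdual_Ltop_linear(2) vzero_in_Lcarrier by (metis mult_zero_left vscale_zero)

text \<open>An equicontinuous set of functionals is uniformly bounded by 1 on a basic neighbourhood
  of 0, and scaling turns this into domination by a multiple of the sum of the seminorms
  defining that neighbourhood.\<close>

lemma equicontinuous_imp_dominated:
  assumes M: "M \<subseteq> cdual (Ltop X)" and eq: "equicontinuous_on (Ltop X) M"
  shows "\<exists>q. admissible_seminorm X q \<and> (\<forall>\<phi>\<in>M. \<forall>w\<in>Lcarrier X. \<bar>\<phi> w\<bar> \<le> q w)"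
proof -
  obtain U where U: "openin (Ltop X) U" "vzero \<in> U" "\<forall>\<phi>\<in>M. \<forall>w\<in>U. \<bar>\<phi> w - \<phi> vzero\<bar> < 1"
    using eq vzero_in_Lcarrier[of X] unfolding equicontinuous_on_def topspace_Ltop
    by (meson zero_less_one)
  have U1: "\<forall>\<phi>\<in>M. \<forall>w\<in>U. \<bar>\<phi> w\<bar> < 1"
    using U(3) M cdual_Ltop_vzero by fastforce
  obtain F e where Fe: "finite F" "F \<subseteq> {p. admissible_seminorm X p}" "0 < e"
      "{w\<in>Lcarrier X. \<forall>p\<in>F. p (vsub w vzero) < e} \<subseteq> U"
    using U(1,2) unfolding Ltop_def openin_seminorm_topology seminorm_open_def by blast
  define q where "q = (\<lambda>w. \<Sum>p\<in>F. p w)"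
  have q: "admissible_seminorm X q"
    unfolding q_def using admissible_seminorm_sum Fe by blast
  have snF: "\<And>p. p \<in> F \<Longrightarrow> seminorm_on (Lcarrier X) p"
    using Fe(2) admissible_seminorm_def by blast
  have "\<bar>\<phi> w\<bar> \<le> (2/e) * q w" if \<phi>: "\<phi> \<in> M" and w: "w \<in> Lcarrier X" for \<phi> w
  proof -
    have \<phi>_scale: "\<phi> (vscale t w) = t * \<phi> w" for t
      using cdual_Ltop_linear(2)[of \<phi> X] M \<phi> w by auto
    have small: "\<bar>t\<bar> * \<bar>\<phi> w\<bar> < 1" if "\<forall>p\<in>F. \<bar>t\<bar> * p w < e" for t
    proof -
      have "vscale t w \<in> U"
        using Fe(4) that vscale_in_Lcarrier[OF w] snF w unfolding seminorm_on_def
        by (auto simp: vsub_vzero)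
      hence "\<bar>\<phi> (vscale t w)\<bar> < 1" using U1 \<phi> by blast
      thus ?thesis by (simp add: \<phi>_scale abs_mult)
    qed
    have pq: "0 \<le> p w \<and> p w \<le> q w" if "p \<in> F" for p
      unfolding q_def using that Fe(1) snF w
      by (auto intro!: member_le_sum simp: seminorm_on_def)
    show ?thesis
    proof (cases "q w = 0")
      case True
      hence "\<bar>t\<bar> * \<bar>\<phi> w\<bar> < 1" for t
        using pq Fe(3) by (intro small) (metis antisym mult_zero_right)
      from this[of "1 / \<bar>\<phi> w\<bar>"] show ?thesis
        using True by (cases "\<phi> w = 0") auto
    next
      case False
      hence q0: "q w > 0"
        using pq[of _] q w unfolding admissible_seminorm_def seminorm_on_def by force
      have "\<bar>e / (2 * q w)\<bar> * \<bar>\<phi> w\<bar> < 1"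
      proof (rule small, intro ballI)
        fix p assume "p \<in> F"
        hence "e / (2 * q w) * p w \<le> e / (2 * q w) * q w"
          using pq q0 Fe(3) by (intro mult_left_mono) auto
        also have "\<dots> < e" using q0 Fe(3) by simp
        finally show "\<bar>e / (2 * q w)\<bar> * p w < e" using q0 Fe(3) by simp
      qed
      thus ?thesis using q0 Fe(3) by (simp add: field_simps)
    qed
  qed
  moreover have "admissible_seminorm X (\<lambda>w. (2/e) * q w)"
    using admissible_seminorm_scale[OF q, of "2/e"] Fe(3) by simp
  ultimately show ?thesis by blast
qed

subsection \<open>Functionals as pairings with functions on \<open>X\<close>\<close>

definition Lpair :: "('a \<Rightarrow> real) \<Rightarrow> ('a \<Rightarrow> real) \<Rightarrow> real" where
  "Lpair v w = (\<Sum>y\<in>supp w. w y * v y)"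

lemma Lpair_superset: "finite T \<Longrightarrow> supp w \<subseteq> T \<Longrightarrow> Lpair v w = (\<Sum>y\<in>T. w y * v y)"
  unfolding Lpair_def by (rule sum.mono_neutral_left) auto

lemma Lpair_vadd:
  assumes "w1 \<in> Lcarrier X" "w2 \<in> Lcarrier X"
  shows "Lpair v (vadd w1 w2) = Lpair v w1 + Lpair v w2"
proof -
  let ?T = "supp w1 \<union> supp w2"
  have T: "finite ?T"
    using assms finite_supp_Lcarrier by blast
  have "Lpair v (vadd w1 w2) = (\<Sum>y\<in>?T. vadd w1 w2 y * v y)"
    by (rule Lpair_superset[OF T]) (auto simp: vadd_def)
  also have "\<dots> = (\<Sum>y\<in>?T. w1 y * v y) + (\<Sum>y\<in>?T. w2 y * v y)"
    by (simp add: vadd_def distrib_right sum.distrib)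
  also have "\<dots> = Lpair v w1 + Lpair v w2"
    using Lpair_superset[OF T, of w1 v] Lpair_superset[OF T, of w2 v] by auto
  finally show ?thesis .
qed

lemma Lpair_vscale:
  assumes "w \<in> Lcarrier X"
  shows "Lpair v (vscale c w) = c * Lpair v w"
proof -
  have "Lpair v (vscale c w) = (\<Sum>y\<in>supp w. vscale c w y * v y)"
    using assms by (intro Lpair_superset finite_supp_Lcarrier) (auto simp: vscale_def)
  thus ?thesis by (simp add: vscale_def Lpair_def sum_distrib_left mult.assoc)
qed

lemma Lpair_Ldelta_diff: "Lpair v (vsub (Ldelta y) (Ldelta x)) = v y - v x"
proof -
  have T: "finite {x, y}" by simp
  have "supp (vsub (Ldelta y) (Ldelta x)) \<subseteq> {x, y}"
    by (auto simp: vsub_def Ldelta_def)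
  from Lpair_superset[OF T this, of v] show ?thesis
    by (cases "x = y") (simp_all add: vsub_def Ldelta_def)
qed

lemma Lpair_diff: "Lpair (\<lambda>y. g y - h y) w = Lpair g w - Lpair h w"
  unfolding Lpair_def by (simp add: right_diff_distrib sum_subtractf)

lemma Lpair_scale: "Lpair (\<lambda>y. c * g y) w = c * Lpair g w"
  unfolding Lpair_def by (simp add: sum_distrib_left mult.left_commute)

lemma Lpair_cong: "(\<And>y. w y \<noteq> 0 \<Longrightarrow> g y = h y) \<Longrightarrow> Lpair g w = Lpair h w"
  unfolding Lpair_def by (rule sum.cong) auto

lemma abs_Lpair_le: "\<bar>Lpair v w\<bar> \<le> (\<Sum>y\<in>supp w. \<bar>w y\<bar> * \<bar>v y\<bar>)"
  unfolding Lpair_def by (rule order_trans[OF sum_abs]) (simp add: abs_mult)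

lemma linear_on_Lcarrier_eq_sum:
  assumes add: "\<forall>v\<in>Lcarrier X. \<forall>w\<in>Lcarrier X. \<phi> (vadd v w) = \<phi> v + \<phi> w"
    and scale: "\<forall>c. \<forall>v\<in>Lcarrier X. \<phi> (vscale c v) = c * \<phi> v"
    and "finite T" "w \<in> Lcarrier X" "supp w \<subseteq> T"
  shows "\<phi> w = (\<Sum>y\<in>T. w y * \<phi> (Ldelta y))"
  using assms(3-5)
proof (induction T arbitrary: w rule: finite_induct)
  case empty
  hence "w = vzero" by (auto simp: vzero_def)
  thus ?case
    using scale vzero_in_Lcarrier[of X] vscale_zero[of vzero] by (metis mult_zero_left sum.empty)
next
  case (insert a T)
  define w' where "w' = w(a := 0)"
  have w': "w' \<in> Lcarrier X"
    unfolding w'_def using insert.prems(1) by (rule Lcarrier_subset) auto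
  have "supp w' \<subseteq> T"
    using insert.prems(2) unfolding w'_def by auto
  hence "\<phi> w' = (\<Sum>y\<in>T. w' y * \<phi> (Ldelta y))"
    by (rule insert.IH[OF w'])
  also have "\<dots> = (\<Sum>y\<in>T. w y * \<phi> (Ldelta y))"
    using insert.hyps(2) unfolding w'_def by (intro sum.cong) auto
  finally have IH: "\<phi> w' = (\<Sum>y\<in>T. w y * \<phi> (Ldelta y))" .
  show ?case
  proof (cases "w a = 0")
    case True
    hence "w' = w" unfolding w'_def by auto
    thus ?thesis using IH True insert.hyps by simp
  next
    case False
    hence a: "Ldelta a \<in> Lcarrier X"
      using supp_Lcarrier_subset[OF insert.prems(1)] by (intro Ldelta_in_Lcarrier) blast
    have "w = vadd (vscale (w a) (Ldelta a)) w'"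
      unfolding w'_def by (auto simp: vadd_def vscale_def Ldelta_def)
    hence "\<phi> w = \<phi> (vscale (w a) (Ldelta a)) + \<phi> w'"
      using add vscale_in_Lcarrier[OF a] w' by metis
    also have "\<dots> = w a * \<phi> (Ldelta a) + \<phi> w'"
      using scale a by simp
    finally show ?thesis using IH insert.hyps by simp
  qed
qed

lemma linear_on_Lcarrier_eq_Lpair:
  assumes "\<forall>v\<in>Lcarrier X. \<forall>w\<in>Lcarrier X. \<phi> (vadd v w) = \<phi> v + \<phi> w"
    and "\<forall>c. \<forall>v\<in>Lcarrier X. \<phi> (vscale c v) = c * \<phi> v"
    and "w \<in> Lcarrier X"
  shows "\<phi> w = Lpair (\<lambda>y. \<phi> (Ldelta y)) w"
  unfolding Lpair_def using assms finite_supp_Lcarrier by (intro linear_on_Lcarrier_eq_sum) auto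

definition sup_seminorm :: "('a \<Rightarrow> real) set \<Rightarrow> ('a \<Rightarrow> real) \<Rightarrow> real" where
  "sup_seminorm V w = (SUP v\<in>V. \<bar>Lpair v w\<bar>)"

locale pointwise_bounded_family =
  fixes X :: "'a topology" and V :: "('a \<Rightarrow> real) set" and C :: "'a \<Rightarrow> real"
  assumes nonempty: "V \<noteq> {}"
    and bounded: "\<And>x v. x \<in> topspace X \<Longrightarrow> v \<in> V \<Longrightarrow> \<bar>v x\<bar> \<le> C x"
begin

lemma bdd_above_Lpair:
  assumes w: "w \<in> Lcarrier X"
  shows "bdd_above ((\<lambda>v. \<bar>Lpair v w\<bar>) ` V)"
proof -
  have "\<bar>Lpair v w\<bar> \<le> (\<Sum>y\<in>supp w. \<bar>w y\<bar> * C y)" if v: "v \<in> V" for v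
  proof -
    have "\<bar>Lpair v w\<bar> \<le> (\<Sum>y\<in>supp w. \<bar>w y\<bar> * \<bar>v y\<bar>)"
      by (rule abs_Lpair_le)
    also have "\<dots> \<le> (\<Sum>y\<in>supp w. \<bar>w y\<bar> * C y)"
      using v bounded supp_Lcarrier_subset[OF w] by (intro sum_mono mult_left_mono) auto
    finally show ?thesis .
  qed
  thus ?thesis by (intro bdd_aboveI2) blast
qed

lemma Lpair_le_sup_seminorm: "w \<in> Lcarrier X \<Longrightarrow> v \<in> V \<Longrightarrow> \<bar>Lpair v w\<bar> \<le> sup_seminorm V w"
  unfolding sup_seminorm_def using bdd_above_Lpair by (intro cSUP_upper) auto

lemma sup_seminorm_le: "(\<And>v. v \<in> V \<Longrightarrow> \<bar>Lpair v w\<bar> \<le> r) \<Longrightarrow> sup_seminorm V w \<le> r"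
  unfolding sup_seminorm_def using nonempty by (intro cSUP_least) auto

lemma sup_seminorm_nonneg: "w \<in> Lcarrier X \<Longrightarrow> 0 \<le> sup_seminorm V w"
proof -
  assume w: "w \<in> Lcarrier X"
  obtain v where "v \<in> V" using nonempty by blast
  thus ?thesis using Lpair_le_sup_seminorm[OF w] by (meson abs_ge_zero order_trans)
qed

lemma sup_seminorm_vscale:
  assumes w: "w \<in> Lcarrier X"
  shows "sup_seminorm V (vscale c w) = \<bar>c\<bar> * sup_seminorm V w"
proof -
  have scale: "\<bar>Lpair v (vscale c w)\<bar> = \<bar>c\<bar> * \<bar>Lpair v w\<bar>" for v
    using Lpair_vscale[OF w] by (simp add: abs_mult)
  have le: "sup_seminorm V (vscale c w) \<le> \<bar>c\<bar> * sup_seminorm V w"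
    by (rule sup_seminorm_le) (simp add: scale mult_left_mono Lpair_le_sup_seminorm[OF w])
  show ?thesis
  proof (cases "c = 0")
    case True
    thus ?thesis using le sup_seminorm_nonneg[OF vscale_in_Lcarrier[OF w], of c] by simp
  next
    case False
    have "sup_seminorm V w \<le> sup_seminorm V (vscale c w) / \<bar>c\<bar>"
    proof (rule sup_seminorm_le)
      fix v assume "v \<in> V"
      hence "\<bar>c\<bar> * \<bar>Lpair v w\<bar> \<le> sup_seminorm V (vscale c w)"
        using Lpair_le_sup_seminorm[OF vscale_in_Lcarrier[OF w]] scale by metis
      thus "\<bar>Lpair v w\<bar> \<le> sup_seminorm V (vscale c w) / \<bar>c\<bar>"
        using False by (simp add: field_simps)
    qed
    thus ?thesis using le False by (simp add: field_simps)
  qed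
qed

lemma seminorm_on_sup_seminorm: "seminorm_on (Lcarrier X) (sup_seminorm V)"
  unfolding seminorm_on_def
proof (intro conjI ballI allI)
  fix v w assume v: "v \<in> Lcarrier X" and w: "w \<in> Lcarrier X"
  show "sup_seminorm V (vadd v w) \<le> sup_seminorm V v + sup_seminorm V w"
  proof (rule sup_seminorm_le)
    fix u assume "u \<in> V"
    thus "\<bar>Lpair u (vadd v w)\<bar> \<le> sup_seminorm V v + sup_seminorm V w"
      using Lpair_vadd[OF v w] Lpair_le_sup_seminorm[OF v] Lpair_le_sup_seminorm[OF w]
      by (smt (verit))
  qed
qed (simp_all add: sup_seminorm_nonneg sup_seminorm_vscale)

lemma admissible_sup_seminorm:
  assumes equicontinuous: "\<And>x e. x \<in> topspace X \<Longrightarrow> e > 0 \<Longrightarrow>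
     \<exists>U. openin X U \<and> x \<in> U \<and> (\<forall>y\<in>U. \<forall>v\<in>V. \<bar>v y - v x\<bar> \<le> e)"
  shows "admissible_seminorm X (sup_seminorm V)"
  unfolding admissible_seminorm_def
proof (intro conjI seminorm_on_sup_seminorm ballI allI impI)
  fix x e assume x: "x \<in> topspace X" and e: "(e::real) > 0"
  obtain U where U: "openin X U" "x \<in> U" "\<forall>y\<in>U. \<forall>v\<in>V. \<bar>v y - v x\<bar> \<le> e/2"
    using equicontinuous[OF x, of "e/2"] e by auto
  have "sup_seminorm V (vsub (Ldelta y) (Ldelta x)) \<le> e/2" if "y \<in> U" for y
    using U(3) that by (intro sup_seminorm_le) (simp add: Lpair_Ldelta_diff)
  thus "\<exists>U. openin X U \<and> x \<in> U \<and> (\<forall>y\<in>U. sup_seminorm V (vsub (Ldelta y) (Ldelta x)) < e)"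
    using U e by (intro exI[of _ U]) force
qed

end

locale dominated_sequence =
  fixes X :: "'a topology" and q :: "('a \<Rightarrow> real) \<Rightarrow> real"
    and \<phi> :: "nat \<Rightarrow> ('a \<Rightarrow> real) \<Rightarrow> real" and b :: "nat \<Rightarrow> 'a \<Rightarrow> real"
  assumes admissible_q: "admissible_seminorm X q"
    and \<phi>_vadd: "\<And>m v w. v \<in> Lcarrier X \<Longrightarrow> w \<in> Lcarrier X \<Longrightarrow> \<phi> m (vadd v w) = \<phi> m v + \<phi> m w"
    and \<phi>_vscale: "\<And>m c v. v \<in> Lcarrier X \<Longrightarrow> \<phi> m (vscale c v) = c * \<phi> m v"
    and \<phi>_dominated: "\<And>m w. w \<in> Lcarrier X \<Longrightarrow> \<bar>\<phi> m w\<bar> \<le> q w"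
    and b_in_Lcarrier: "\<And>n. b n \<in> Lcarrier X"
    and b_bounded: "\<And>p. admissible_seminorm X p \<Longrightarrow> \<exists>R. \<forall>n. p (b n) \<le> R"
begin

definition f :: "nat \<Rightarrow> 'a \<Rightarrow> real" where
  "f m x = \<phi> m (Ldelta x)"

definition D :: "'a \<Rightarrow> 'a \<Rightarrow> real" where
  "D x y = q (vsub (Ldelta y) (Ldelta x))"

definition S :: "'a set" where
  "S = (\<Union>n. supp (b n))"

lemma seminorm_q: "seminorm_on (Lcarrier X) q"
  using admissible_q admissible_seminorm_def by blast

lemma D_nonneg: "x \<in> topspace X \<Longrightarrow> y \<in> topspace X \<Longrightarrow> 0 \<le> D x y"
  unfolding D_def using seminorm_q vsub_in_Lcarrier[OF Ldelta_in_Lcarrier Ldelta_in_Lcarrier, of y X x]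
  unfolding seminorm_on_def by blast

lemma D_self: "D x x = 0"
proof -
  have "vsub (Ldelta x) (Ldelta x) = vzero"
    by (auto simp: vsub_def vzero_def)
  thus ?thesis
    unfolding D_def using seminorm_on_vzero[OF seminorm_q vzero_in_Lcarrier] by simp
qed

lemma D_commute: "x \<in> topspace X \<Longrightarrow> y \<in> topspace X \<Longrightarrow> D x y = D y x"
  unfolding D_def by (rule seminorm_on_vsub_commute[OF seminorm_q Ldelta_in_Lcarrier Ldelta_in_Lcarrier])

lemma D_triangle:
  assumes "x \<in> topspace X" "y \<in> topspace X" "z \<in> topspace X"
  shows "D x z \<le> D x y + D y z"
  using seminorm_on_vsub_triangle[OF seminorm_q Ldelta_in_Lcarrier[OF assms(3)]
      Ldelta_in_Lcarrier[OF assms(2)] Ldelta_in_Lcarrier[OF assms(1)]]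
  unfolding D_def by linarith

lemma abs_D_diff_le:
  assumes "x \<in> topspace X" "y \<in> topspace X" "t \<in> topspace X"
  shows "\<bar>D t y - D t x\<bar> \<le> D x y"
  using D_triangle[OF assms(3,1,2)] D_triangle[OF assms(3,2,1)] D_commute[OF assms(2,1)] by linarith

lemma D_small_nhd:
  "x \<in> topspace X \<Longrightarrow> e > 0 \<Longrightarrow> \<exists>U. openin X U \<and> x \<in> U \<and> (\<forall>y\<in>U. D x y < e)"
  using admissible_q unfolding admissible_seminorm_def D_def by blast

lemma \<phi>_vsub: "v \<in> Lcarrier X \<Longrightarrow> w \<in> Lcarrier X \<Longrightarrow> \<phi> m (vsub v w) = \<phi> m v - \<phi> m w"
  using \<phi>_vadd[OF _ vscale_in_Lcarrier, of v w m "-1"] \<phi>_vscale[of w m "-1"]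
  by (simp add: vsub_eq_vadd_vscale)

lemma f_Lipschitz: "x \<in> topspace X \<Longrightarrow> y \<in> topspace X \<Longrightarrow> \<bar>f m y - f m x\<bar> \<le> D x y"
  unfolding f_def D_def
  using \<phi>_vsub[OF Ldelta_in_Lcarrier Ldelta_in_Lcarrier, of y x m]
    \<phi>_dominated[OF vsub_in_Lcarrier[OF Ldelta_in_Lcarrier Ldelta_in_Lcarrier], of y x m]
  by simp

lemma abs_f_le: "x \<in> topspace X \<Longrightarrow> \<bar>f m x\<bar> \<le> q (Ldelta x)"
  unfolding f_def using \<phi>_dominated[OF Ldelta_in_Lcarrier] by blast

lemma \<phi>_eq_Lpair: "w \<in> Lcarrier X \<Longrightarrow> \<phi> m w = Lpair (f m) w"
  unfolding f_def by (rule linear_on_Lcarrier_eq_Lpair) (simp_all add: \<phi>_vadd \<phi>_vscale)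

lemma countable_S: "countable S"
  unfolding S_def using b_in_Lcarrier finite_supp_Lcarrier
  by (intro countable_UN) (auto intro: countable_finite)

lemma S_subset: "S \<subseteq> topspace X"
  unfolding S_def using supp_Lcarrier_subset[OF b_in_Lcarrier] by blast

lemma exists_subseq_convergent_on_S:
  "\<exists>\<sigma>. strict_mono \<sigma> \<and> (\<forall>s\<in>S. convergent (\<lambda>k. f (\<sigma> k) s))"
proof -
  define P where "P = (\<lambda>(n::nat) (r::nat\<Rightarrow>nat).
    from_nat_into S n \<in> S \<longrightarrow> convergent (\<lambda>k. f (r k) (from_nat_into S n)))"
  interpret subseqs P
  proof
    fix n and s :: "nat \<Rightarrow> nat" assume "strict_mono s"
    show "\<exists>r'. strict_mono r' \<and> P n (s \<circ> r')"
    proof (cases "from_nat_into S n \<in> S")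
      case False
      thus ?thesis unfolding P_def by (auto intro: strict_mono_id)
    next
      case True
      let ?z = "from_nat_into S n"
      have "bounded (range (\<lambda>k. f (s k) ?z))"
        unfolding bounded_iff using abs_f_le True S_subset by (auto simp: real_norm_def)
      then obtain l r where r: "strict_mono r" "((\<lambda>k. f (s k) ?z) \<circ> r) \<longlonglongrightarrow> l"
        using bounded_imp_convergent_subsequence by blast
      hence "convergent (\<lambda>k. f ((s \<circ> r) k) ?z)"
        unfolding convergent_def by (auto simp: o_def)
      thus ?thesis using r(1) unfolding P_def by blast
    qed
  qed
  have "convergent (\<lambda>k. f (diagseq k) s)" if s: "s \<in> S" for s
  proof -
    define n where "n = to_nat_on S s"
    have "P n (diagseq \<circ> ((+) (Suc n)))"
    proof (rule diagseq_holds)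
      fix r s' n' assume "strict_mono (r::nat\<Rightarrow>nat)" "P n' s'"
      thus "P n' (s' \<circ> r)"
        unfolding P_def convergent_def using LIMSEQ_subseq_LIMSEQ by (fastforce simp: o_def)
    qed
    moreover have "from_nat_into S n = s"
      unfolding n_def using countable_S s by simp
    ultimately have "convergent (\<lambda>k. f (diagseq (k + Suc n)) s)"
      using s unfolding P_def by (simp add: o_def add.commute)
    then obtain l where "(\<lambda>k. f (diagseq (k + Suc n)) s) \<longlonglongrightarrow> l"
      unfolding convergent_def by blast
    hence "(\<lambda>k. f (diagseq k) s) \<longlonglongrightarrow> l"
      by (rule LIMSEQ_offset)
    thus ?thesis unfolding convergent_def by blast
  qed
  thus ?thesis using subseq_diagseq by blast
qed

end

subsection \<open>A subsequence that is not uniformly Cauchy on the \<open>b\<^sub>n\<close>\<close>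

definition clip :: "real \<Rightarrow> real \<Rightarrow> real" where
  "clip t z = max (-t) (min t z)"

lemma abs_clip_le: "t \<ge> 0 \<Longrightarrow> \<bar>clip t z\<bar> \<le> t"
  unfolding clip_def by auto

lemma abs_clip_diff_le: "\<bar>clip t a - clip t b\<bar> \<le> \<bar>a - b\<bar>"
  unfolding clip_def by auto

lemma abs_clip_diff_le_double: "t \<ge> 0 \<Longrightarrow> \<bar>clip t a - clip t b\<bar> \<le> 2 * t"
  unfolding clip_def by auto

lemma abs_diff_clip_Lipschitz: "\<bar>(a - clip t a) - (b - clip t b)\<bar> \<le> \<bar>a - b\<bar>"
  unfolding clip_def by auto

lemma abs_diff_clip_le: "t \<ge> 0 \<Longrightarrow> \<bar>z - clip t z\<bar> \<le> \<bar>z\<bar>"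
  unfolding clip_def by auto

lemma diff_clip_eq_0: "\<bar>z\<bar> \<le> t \<Longrightarrow> z - clip t z = 0"
  unfolding clip_def by auto

lemma min_le_sqrt_mult:
  fixes d t :: real
  assumes "0 \<le> d" "0 < t"
  shows "min d t \<le> sqrt t * sqrt d"
proof (cases "d \<le> t")
  case True
  hence "sqrt d * sqrt d \<le> sqrt t * sqrt d"
    using assms by (intro mult_right_mono) auto
  thus ?thesis using assms by simp
next
  case False
  hence "sqrt t * sqrt t \<le> sqrt t * sqrt d"
    using assms by (intro mult_left_mono) auto
  thus ?thesis using assms by simp
qed

locale oscillating_subsequence = dominated_sequence +
  fixes \<sigma> :: "nat \<Rightarrow> nat" and k k' n :: "nat \<Rightarrow> nat" and \<eta> :: real
  assumes convergent_on_S: "\<And>s. s \<in> S \<Longrightarrow> convergent (\<lambda>i. f (\<sigma> i) s)"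
    and \<eta>_pos: "\<eta> > 0"
    and k_ge: "\<And>j. k j \<ge> j" and k'_ge: "\<And>j. k' j \<ge> j"
    and oscillation: "\<And>j. \<eta> \<le> \<bar>\<phi> (\<sigma> (k j)) (b (n j)) - \<phi> (\<sigma> (k' j)) (b (n j))\<bar>"
begin

definition u :: "nat \<Rightarrow> 'a \<Rightarrow> real" where
  "u j y = f (\<sigma> (k j)) y - f (\<sigma> (k' j)) y"

lemma u_Lipschitz: "x \<in> topspace X \<Longrightarrow> y \<in> topspace X \<Longrightarrow> \<bar>u j y - u j x\<bar> \<le> 2 * D x y"
  unfolding u_def using f_Lipschitz[of x y "\<sigma> (k j)"] f_Lipschitz[of x y "\<sigma> (k' j)"] by linarith

lemma u_tendsto_zero_on_S: "s \<in> S \<Longrightarrow> e > 0 \<Longrightarrow> \<exists>N. \<forall>j\<ge>N. \<bar>u j s\<bar> < e"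
proof -
  assume "s \<in> S" "e > 0"
  then obtain M where M: "\<forall>i\<ge>M. \<forall>i'\<ge>M. norm (f (\<sigma> i) s - f (\<sigma> i') s) < e"
    using CauchyD convergent_Cauchy[OF convergent_on_S] by blast
  have "\<bar>u j s\<bar> < e" if "j \<ge> M" for j
    using M k_ge[of j] k'_ge[of j] that unfolding u_def real_norm_def by (meson order_trans)
  thus ?thesis by blast
qed

lemma u_oscillation: "\<eta> \<le> \<bar>Lpair (u j) (b (n j))\<bar>"
  using oscillation[of j] unfolding u_def Lpair_diff \<phi>_eq_Lpair[OF b_in_Lcarrier] by simp

definition H :: "('a \<Rightarrow> real) set" where
  "H = {v. (\<forall>x\<in>topspace X. \<bar>v x\<bar> \<le> 1) \<and>
           (\<forall>x\<in>topspace X. \<forall>y\<in>topspace X. \<bar>v y - v x\<bar> \<le> sqrt (D x y))}"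

lemma pointwise_bounded_H: "pointwise_bounded_family X H (\<lambda>_. 1)"
proof
  have "(\<lambda>_. 0) \<in> H" unfolding H_def using D_nonneg by simp
  thus "H \<noteq> {}" by blast
qed (auto simp: H_def)

lemma admissible_sup_seminorm_H: "admissible_seminorm X (sup_seminorm H)"
proof (rule pointwise_bounded_family.admissible_sup_seminorm[OF pointwise_bounded_H])
  fix x e assume x: "x \<in> topspace X" and e: "(e::real) > 0"
  obtain U where U: "openin X U" "x \<in> U" "\<forall>y\<in>U. D x y < e\<^sup>2"
    using D_small_nhd[OF x, of "e\<^sup>2"] e by auto
  have "\<bar>v y - v x\<bar> \<le> e" if y: "y \<in> U" and v: "v \<in> H" for y v
  proof -
    have "\<bar>v y - v x\<bar> \<le> sqrt (D x y)"
      using v x openin_subset[OF U(1)] y unfolding H_def by blast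
    also have "\<dots> \<le> sqrt (e\<^sup>2)"
      using U(3) y by (simp only: real_sqrt_le_iff) (meson less_imp_le)
    finally show ?thesis using e by simp
  qed
  thus "\<exists>U. openin X U \<and> x \<in> U \<and> (\<forall>y\<in>U. \<forall>v\<in>H. \<bar>v y - v x\<bar> \<le> e)"
    using U by blast
qed

definition R :: real where
  "R = (SOME R. \<forall>n. sup_seminorm H (b n) \<le> R)"

lemma sup_seminorm_H_le_R: "sup_seminorm H (b i) \<le> R"
  using someI_ex[OF b_bounded[OF admissible_sup_seminorm_H]] unfolding R_def by blast

lemma R_nonneg: "0 \<le> R"
  using pointwise_bounded_family.sup_seminorm_nonneg[OF pointwise_bounded_H b_in_Lcarrier]
    sup_seminorm_H_le_R order_trans by blast

text \<open>The truncation level \<open>\<theta> = \<rho>\<^sup>2\<close>, with \<open>\<rho>\<close> small enough that \<open>3 \<rho> R < \<eta>/2\<close>.\<close>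

definition \<rho> :: real where
  "\<rho> = min 1 (\<eta> / (6 * (R + 1)))"

definition \<theta> :: real where
  "\<theta> = \<rho>\<^sup>2"

lemma \<rho>_pos: "0 < \<rho>"
  unfolding \<rho>_def using \<eta>_pos R_nonneg by simp

lemma \<theta>_pos: "0 < \<theta>"
  unfolding \<theta>_def using \<rho>_pos by simp

lemma \<theta>_le_\<rho>: "\<theta> \<le> \<rho>"
proof -
  have "\<rho> \<le> 1" unfolding \<rho>_def by simp
  thus ?thesis unfolding \<theta>_def power2_eq_square using \<rho>_pos by (simp add: mult_left_le)
qed

lemma sqrt_\<theta>: "sqrt \<theta> = \<rho>"
  unfolding \<theta>_def using \<rho>_pos by simp

lemma three_\<rho>_R_less: "3 * \<rho> * R < \<eta> / 2"
proof -
  have "3 * \<rho> * R \<le> 3 * (\<eta> / (6 * (R + 1))) * R"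
    unfolding \<rho>_def using R_nonneg by (intro mult_right_mono) auto
  also have "\<dots> = (\<eta> / 2) * (R / (R + 1))"
    using R_nonneg by (simp add: field_simps)
  also have "\<dots> < \<eta> / 2"
    using R_nonneg \<eta>_pos by (simp add: field_simps)
  finally show ?thesis .
qed

lemma abs_Lpair_clip_u_le: "\<bar>Lpair (\<lambda>y. clip \<theta> (u j y)) (b i)\<bar> \<le> 3 * \<rho> * R"
proof -
  define L where "L = 3 * \<rho>"
  have L: "L > 0" unfolding L_def using \<rho>_pos by simp
  define v where "v = (\<lambda>y. clip \<theta> (u j y) / L)"
  have "v \<in> H"
    unfolding H_def
  proof (intro CollectI conjI ballI)
    fix x
    have "\<bar>clip \<theta> (u j x)\<bar> \<le> L"
      using abs_clip_le[of \<theta> "u j x"] \<theta>_pos \<theta>_le_\<rho> \<rho>_pos unfolding L_def by linarith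
    thus "\<bar>v x\<bar> \<le> 1" unfolding v_def using L by (simp add: abs_divide)
  next
    fix x y assume x: "x \<in> topspace X" and y: "y \<in> topspace X"
    have "\<bar>clip \<theta> (u j y) - clip \<theta> (u j x)\<bar> \<le> 2 * min (D x y) \<theta>"
      using abs_clip_diff_le[of \<theta> "u j y" "u j x"] abs_clip_diff_le_double[of \<theta> "u j y" "u j x"]
        u_Lipschitz[OF x y, of j] \<theta>_pos by simp
    also have "\<dots> \<le> 2 * (sqrt \<theta> * sqrt (D x y))"
      using min_le_sqrt_mult[OF D_nonneg[OF x y] \<theta>_pos] by simp
    also have "\<dots> \<le> L * sqrt (D x y)"
      unfolding L_def sqrt_\<theta> using \<rho>_pos D_nonneg[OF x y] by simp
    finally show "\<bar>v y - v x\<bar> \<le> sqrt (D x y)"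
      unfolding v_def using L by (simp add: diff_divide_distrib[symmetric] abs_divide field_simps)
  qed
  hence "\<bar>Lpair v (b i)\<bar> \<le> R"
    using pointwise_bounded_family.Lpair_le_sup_seminorm[OF pointwise_bounded_H b_in_Lcarrier]
      sup_seminorm_H_le_R order_trans by blast
  moreover have "(\<lambda>y. clip \<theta> (u j y)) = (\<lambda>y. L * v y)"
    unfolding v_def using L by simp
  ultimately show ?thesis
    unfolding L_def using \<rho>_pos by (simp add: Lpair_scale abs_mult mult_left_mono)
qed

lemma Lpair_excess_large: "\<eta> / 2 < \<bar>Lpair (\<lambda>y. u j y - clip \<theta> (u j y)) (b (n j))\<bar>"
  using u_oscillation[of j] abs_Lpair_clip_u_le[of j "n j"] three_\<rho>_R_less
  unfolding Lpair_diff by linarith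

definition \<kappa> :: real where
  "\<kappa> = 16 / \<theta>"

definition T :: "nat \<Rightarrow> 'a set" where
  "T j = supp (b (n j))"

definition bump :: "nat \<Rightarrow> 'a \<Rightarrow> real" where
  "bump j y = min 1 (\<Sum>t\<in>T j. max 0 (1 - \<kappa> * D t y))"

definition \<psi> :: "nat \<Rightarrow> 'a \<Rightarrow> real" where
  "\<psi> j y = (u j y - clip \<theta> (u j y)) * bump j y"

lemma \<kappa>_pos: "\<kappa> > 0"
  unfolding \<kappa>_def using \<theta>_pos by simp

lemma finite_T: "finite (T j)"
  unfolding T_def using finite_supp_Lcarrier[OF b_in_Lcarrier] .

lemma T_subset_S: "T j \<subseteq> S"
  unfolding T_def S_def by blast

lemma bump_eq_1: "t \<in> T j \<Longrightarrow> bump j t = 1"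
proof -
  assume t: "t \<in> T j"
  have "1 \<le> (\<Sum>t'\<in>T j. max 0 (1 - \<kappa> * D t' t))"
    using member_le_sum[OF t _ finite_T, of "\<lambda>t'. max 0 (1 - \<kappa> * D t' t)"] by (simp add: D_self)
  thus ?thesis unfolding bump_def by simp
qed

lemma bump_Lipschitz:
  assumes x: "x \<in> topspace X" and y: "y \<in> topspace X"
  shows "\<bar>bump j y - bump j x\<bar> \<le> \<kappa> * card (T j) * D x y"
proof -
  let ?g = "\<lambda>t z. max 0 (1 - \<kappa> * D t z)"
  have "\<bar>bump j y - bump j x\<bar> \<le> \<bar>(\<Sum>t\<in>T j. ?g t y) - (\<Sum>t\<in>T j. ?g t x)\<bar>"
    unfolding bump_def by linarith
  also have "\<dots> \<le> (\<Sum>t\<in>T j. \<bar>?g t y - ?g t x\<bar>)"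
    by (metis (no_types) sum_abs sum_subtractf)
  also have "\<dots> \<le> (\<Sum>t\<in>T j. \<kappa> * D x y)"
  proof (rule sum_mono)
    fix t assume "t \<in> T j"
    hence "\<bar>D t y - D t x\<bar> \<le> D x y"
      using abs_D_diff_le[OF x y] T_subset_S S_subset by blast
    hence "\<kappa> * \<bar>D t y - D t x\<bar> \<le> \<kappa> * D x y"
      using \<kappa>_pos by simp
    moreover have "\<bar>?g t y - ?g t x\<bar> \<le> \<bar>(1 - \<kappa> * D t y) - (1 - \<kappa> * D t x)\<bar>"
      by linarith
    moreover have "\<bar>(1 - \<kappa> * D t y) - (1 - \<kappa> * D t x)\<bar> = \<kappa> * \<bar>D t y - D t x\<bar>"
      using \<kappa>_pos by (simp add: abs_mult right_diff_distrib[symmetric] abs_minus_commute)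
    ultimately show "\<bar>?g t y - ?g t x\<bar> \<le> \<kappa> * D x y" by linarith
  qed
  finally show ?thesis by (simp add: mult_ac)
qed

lemma \<psi>_Lipschitz:
  assumes x: "x \<in> topspace X" and y: "y \<in> topspace X"
  shows "\<bar>\<psi> j y - \<psi> j x\<bar> \<le> (2 + \<bar>u j x\<bar> * \<kappa> * card (T j)) * D x y"
proof -
  let ?W = "\<lambda>y. u j y - clip \<theta> (u j y)"
  have bump: "0 \<le> bump j y" "bump j y \<le> 1"
    unfolding bump_def by (simp_all add: sum_nonneg)
  have "\<bar>(?W y - ?W x) * bump j y\<bar> \<le> \<bar>?W y - ?W x\<bar>"
    using bump by (simp add: abs_mult mult_left_le)
  also have "\<dots> \<le> 2 * D x y"
    using abs_diff_clip_Lipschitz[of "u j y" \<theta> "u j x"] u_Lipschitz[OF x y, of j] by linarith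
  finally have 1: "\<bar>(?W y - ?W x) * bump j y\<bar> \<le> 2 * D x y" .
  have 2: "\<bar>?W x * (bump j y - bump j x)\<bar> \<le> \<bar>u j x\<bar> * (\<kappa> * card (T j) * D x y)"
    unfolding abs_mult using abs_diff_clip_le[of \<theta> "u j x"] \<theta>_pos bump_Lipschitz[OF x y, of j]
    by (intro mult_mono) auto
  have "\<psi> j y - \<psi> j x = (?W y - ?W x) * bump j y + ?W x * (bump j y - bump j x)"
    unfolding \<psi>_def by (simp add: algebra_simps)
  hence "\<bar>\<psi> j y - \<psi> j x\<bar> \<le> 2 * D x y + \<bar>u j x\<bar> * (\<kappa> * card (T j) * D x y)"
    using 1 2 abs_triangle_ineq[of "(?W y - ?W x) * bump j y" "?W x * (bump j y - bump j x)"]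
    by linarith
  thus ?thesis by (simp add: algebra_simps)
qed

lemma \<psi>_eventually_zero_near_S:
  assumes "s \<in> S"
  shows "\<exists>N. \<forall>j\<ge>N. \<forall>y\<in>topspace X. D s y < 3 * \<theta> / 8 \<longrightarrow> \<psi> j y = 0"
proof -
  have s: "s \<in> topspace X" using assms S_subset by blast
  obtain N where N: "\<forall>j\<ge>N. \<bar>u j s\<bar> < \<theta> / 4"
    using u_tendsto_zero_on_S[OF assms, of "\<theta> / 4"] \<theta>_pos by auto
  have "\<psi> j y = 0" if j: "j \<ge> N" and y: "y \<in> topspace X" and "D s y < 3 * \<theta> / 8" for j y
  proof -
    have "\<bar>u j y\<bar> \<le> \<theta>"
      using u_Lipschitz[OF s y, of j] N[rule_format, OF j] \<open>D s y < 3 * \<theta> / 8\<close> by linarith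
    thus ?thesis unfolding \<psi>_def by (simp add: diff_clip_eq_0)
  qed
  thus ?thesis by blast
qed

lemma \<psi>_zero_far_from_S:
  assumes "\<forall>t\<in>S. \<theta> / 16 \<le> D t y"
  shows "\<psi> j y = 0"
proof -
  have "max 0 (1 - \<kappa> * D t y) = 0" if "t \<in> T j" for t
  proof -
    have "\<theta> / 16 \<le> D t y" using assms that T_subset_S by blast
    hence "1 \<le> \<kappa> * D t y" unfolding \<kappa>_def using \<theta>_pos by (simp add: field_simps)
    thus ?thesis by simp
  qed
  thus ?thesis unfolding \<psi>_def bump_def by simp
qed

lemma \<psi>_locally_eventually_zero:
  assumes x: "x \<in> topspace X"
  shows "\<exists>U N. openin X U \<and> x \<in> U \<and> (\<forall>j\<ge>N. \<forall>y\<in>U. \<psi> j y = 0)"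
proof -
  obtain U where U: "openin X U" "x \<in> U" "\<forall>y\<in>U. D x y < \<theta> / 16"
    using D_small_nhd[OF x, of "\<theta> / 16"] \<theta>_pos by auto
  have UX: "y \<in> topspace X" if "y \<in> U" for y
    using openin_subset[OF U(1)] that by blast
  show ?thesis
  proof (cases "\<exists>s\<in>S. D s x < \<theta> / 8")
    case True
    then obtain s where s: "s \<in> S" "D s x < \<theta> / 8" by blast
    have sX: "s \<in> topspace X" using s(1) S_subset by blast
    obtain N where N: "\<forall>j\<ge>N. \<forall>y\<in>topspace X. D s y < 3 * \<theta> / 8 \<longrightarrow> \<psi> j y = 0"
      using \<psi>_eventually_zero_near_S[OF s(1)] by blast
    have "\<psi> j y = 0" if j: "j \<ge> N" and y: "y \<in> U" for j y
    proof -
      have "D s y < 3 * \<theta> / 8"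
        using D_triangle[OF sX x UX[OF y]] s(2) bspec[OF U(3) y] \<theta>_pos by linarith
      thus ?thesis using N j UX[OF y] by blast
    qed
    thus ?thesis using U(1,2) by blast
  next
    case False
    have "\<forall>t\<in>S. \<theta> / 16 \<le> D t y" if y: "y \<in> U" for y
    proof
      fix t assume t: "t \<in> S"
      have tX: "t \<in> topspace X" using t S_subset by blast
      have "D t x \<le> D t y + D y x"
        using D_triangle[OF tX UX[OF y] x] .
      moreover have "\<theta> / 8 \<le> D t x" using False t by (simp add: not_less)
      moreover have "D y x < \<theta> / 16" using D_commute[OF UX[OF y] x] bspec[OF U(3) y] by simp
      ultimately show "\<theta> / 16 \<le> D t y" by linarith
    qed
    hence "\<forall>j\<ge>0. \<forall>y\<in>U. \<psi> j y = 0" using \<psi>_zero_far_from_S by blast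
    thus ?thesis using U(1,2) by blast
  qed
qed

definition \<Psi> :: "('a \<Rightarrow> real) set" where
  "\<Psi> = range (\<lambda>j y. real j * \<psi> j y)"

lemma \<Psi>_pointwise_bounded: "x \<in> topspace X \<Longrightarrow> \<exists>c. \<forall>v\<in>\<Psi>. \<bar>v x\<bar> \<le> c"
proof -
  assume "x \<in> topspace X"
  then obtain U N where U: "x \<in> U" "\<forall>j\<ge>N. \<forall>y\<in>U. \<psi> j y = 0"
    using \<psi>_locally_eventually_zero by blast
  have "\<bar>real j * \<psi> j x\<bar> \<le> (\<Sum>i<N. \<bar>real i * \<psi> i x\<bar>)" for j
  proof (cases "j < N")
    case True
    thus ?thesis by (intro member_le_sum) auto
  next
    case False
    thus ?thesis using U by (simp add: sum_nonneg)
  qed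
  thus ?thesis unfolding \<Psi>_def by blast
qed

lemma \<Psi>_equicontinuous:
  assumes x: "x \<in> topspace X" and e: "e > 0"
  shows "\<exists>U. openin X U \<and> x \<in> U \<and> (\<forall>y\<in>U. \<forall>v\<in>\<Psi>. \<bar>v y - v x\<bar> \<le> e)"
proof -
  obtain U1 N where U1: "openin X U1" "x \<in> U1" "\<forall>j\<ge>N. \<forall>y\<in>U1. \<psi> j y = 0"
    using \<psi>_locally_eventually_zero[OF x] by blast
  define K where "K = (\<Sum>i<N. real i * (2 + \<bar>u i x\<bar> * \<kappa> * card (T i)))"
  have K: "0 \<le> K"
    unfolding K_def using \<kappa>_pos by (intro sum_nonneg) simp
  obtain U2 where U2: "openin X U2" "x \<in> U2" "\<forall>y\<in>U2. D x y < e / (K + 1)"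
    using D_small_nhd[OF x, of "e / (K + 1)"] e K by auto
  have "\<bar>real j * \<psi> j y - real j * \<psi> j x\<bar> \<le> e" if y: "y \<in> U1 \<inter> U2" for j y
  proof (cases "j < N")
    case False
    thus ?thesis using U1 y e by simp
  next
    case True
    have yX: "y \<in> topspace X" using openin_subset[OF U1(1)] y by blast
    have "\<bar>real j * \<psi> j y - real j * \<psi> j x\<bar> = real j * \<bar>\<psi> j y - \<psi> j x\<bar>"
      by (simp add: abs_mult right_diff_distrib[symmetric])
    also have "\<dots> \<le> real j * ((2 + \<bar>u j x\<bar> * \<kappa> * card (T j)) * D x y)"
      using \<psi>_Lipschitz[OF x yX, of j] by (intro mult_left_mono) auto
    also have "\<dots> = (real j * (2 + \<bar>u j x\<bar> * \<kappa> * card (T j))) * D x y"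
      by simp
    also have "\<dots> \<le> K * D x y"
      unfolding K_def using True D_nonneg[OF x yX] \<kappa>_pos
      by (intro mult_right_mono member_le_sum[of j "{..<N}" "\<lambda>i. real i * (2 + \<bar>u i x\<bar> * \<kappa> * card (T i))"]) auto
    also have "\<dots> \<le> K * (e / (K + 1))"
      using U2(3) y K by (intro mult_left_mono) auto
    also have "\<dots> \<le> e"
      using K e by (simp add: field_simps)
    finally show ?thesis .
  qed
  thus ?thesis
    unfolding \<Psi>_def using U1 U2 by (intro exI[of _ "U1 \<inter> U2"]) (auto intro: openin_Int)
qed

lemma no_oscillating_subsequence: False
proof -
  obtain C where C: "\<forall>x\<in>topspace X. \<forall>v\<in>\<Psi>. \<bar>v x\<bar> \<le> C x"
    using \<Psi>_pointwise_bounded by metis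
  interpret \<Psi>: pointwise_bounded_family X \<Psi> C
    by unfold_locales (use C in \<open>auto simp: \<Psi>_def\<close>)
  obtain B where B: "\<forall>i. sup_seminorm \<Psi> (b i) \<le> B"
    using b_bounded[OF \<Psi>.admissible_sup_seminorm[OF \<Psi>_equicontinuous]] by blast
  define j where "j = nat \<lceil>2 * B / \<eta>\<rceil> + 1"
  have "2 * B / \<eta> < real j"
    unfolding j_def by linarith
  hence "B < real j * (\<eta> / 2)"
    using \<eta>_pos by (simp add: field_simps)
  also have "\<dots> \<le> real j * \<bar>Lpair (\<psi> j) (b (n j))\<bar>"
  proof -
    have "Lpair (\<psi> j) (b (n j)) = Lpair (\<lambda>y. u j y - clip \<theta> (u j y)) (b (n j))"
      by (rule Lpair_cong) (simp add: \<psi>_def bump_eq_1 T_def)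
    thus ?thesis using Lpair_excess_large[of j] by (intro mult_left_mono) auto
  qed
  also have "\<dots> = \<bar>Lpair (\<lambda>y. real j * \<psi> j y) (b (n j))\<bar>"
    by (simp add: Lpair_scale abs_mult)
  also have "\<dots> \<le> sup_seminorm \<Psi> (b (n j))"
    using \<Psi>.Lpair_le_sup_seminorm[OF b_in_Lcarrier] unfolding \<Psi>_def by blast
  also have "\<dots> \<le> B"
    using B by blast
  finally show False by simp
qed

end

subsection \<open>Interchanging the limits\<close>

lemma double_limits_eq_if_uniformly_Cauchy:
  fixes g :: "nat \<Rightarrow> nat \<Rightarrow> real"
  assumes lim_k: "\<And>n. (\<lambda>k. g k n) \<longlonglongrightarrow> a n" and lim_a: "a \<longlonglongrightarrow> A"
    and lim_n: "\<And>k. (\<lambda>n. g k n) \<longlonglongrightarrow> c k" and lim_c: "c \<longlonglongrightarrow> C"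
    and Cauchy: "\<And>\<epsilon>. \<epsilon> > 0 \<Longrightarrow> \<exists>K. \<forall>k\<ge>K. \<forall>k'\<ge>K. \<forall>n. \<bar>g k n - g k' n\<bar> < \<epsilon>"
  shows "A = C"
proof -
  have "\<bar>C - A\<bar> \<le> 0 + \<epsilon>" if \<epsilon>: "\<epsilon> > 0" for \<epsilon>
  proof -
    obtain K where K: "\<forall>k\<ge>K. \<forall>k'\<ge>K. \<forall>n. \<bar>g k n - g k' n\<bar> < \<epsilon>"
      using Cauchy[OF \<epsilon>] by blast
    have g_a: "\<bar>g k n - a n\<bar> \<le> \<epsilon>" if "k \<ge> K" for k n
    proof (rule Lim_bounded)
      show "(\<lambda>k'. \<bar>g k n - g k' n\<bar>) \<longlonglongrightarrow> \<bar>g k n - a n\<bar>"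
        using lim_k by (intro tendsto_intros)
      show "\<forall>k'\<ge>K. \<bar>g k n - g k' n\<bar> \<le> \<epsilon>"
        using K that by (meson less_imp_le)
    qed
    have c_A: "\<bar>c k - A\<bar> \<le> \<epsilon>" if "k \<ge> K" for k
    proof (rule Lim_bounded)
      show "(\<lambda>n. \<bar>g k n - a n\<bar>) \<longlonglongrightarrow> \<bar>c k - A\<bar>"
        using lim_n lim_a by (intro tendsto_intros)
      show "\<forall>n\<ge>0. \<bar>g k n - a n\<bar> \<le> \<epsilon>"
        using g_a that by blast
    qed
    have "\<bar>C - A\<bar> \<le> \<epsilon>"
    proof (rule Lim_bounded)
      show "(\<lambda>k. \<bar>c k - A\<bar>) \<longlonglongrightarrow> \<bar>C - A\<bar>"
        using lim_c by (intro tendsto_intros)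
      show "\<forall>k\<ge>K. \<bar>c k - A\<bar> \<le> \<epsilon>"
        using c_A by blast
    qed
    thus ?thesis by simp
  qed
  hence "\<bar>C - A\<bar> \<le> 0"
    by (rule field_le_epsilon)
  thus ?thesis by simp
qed

context dominated_sequence
begin

lemma subseq_uniformly_Cauchy:
  assumes "\<And>s. s \<in> S \<Longrightarrow> convergent (\<lambda>i. f (\<sigma> i) s)" and "\<eta> > 0"
  shows "\<exists>K. \<forall>i\<ge>K. \<forall>i'\<ge>K. \<forall>n. \<bar>\<phi> (\<sigma> i) (b n) - \<phi> (\<sigma> i') (b n)\<bar> < \<eta>"
proof (rule ccontr)
  assume "\<not> ?thesis"
  hence "\<forall>j. \<exists>i\<ge>j. \<exists>i'\<ge>j. \<exists>n. \<eta> \<le> \<bar>\<phi> (\<sigma> i) (b n) - \<phi> (\<sigma> i') (b n)\<bar>"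
    by (auto simp: not_less)
  then obtain k k' n where "\<forall>j. k j \<ge> j \<and> k' j \<ge> j \<and>
      \<eta> \<le> \<bar>\<phi> (\<sigma> (k j)) (b (n j)) - \<phi> (\<sigma> (k' j)) (b (n j))\<bar>"
    by metis
  then interpret oscillating_subsequence X q \<phi> b \<sigma> k k' n \<eta>
    by unfold_locales (use assms in auto)
  show False by (rule no_oscillating_subsequence)
qed

lemma double_limits_eq:
  assumes "\<And>n. (\<lambda>m. \<phi> m (b n)) \<longlonglongrightarrow> a n" "a \<longlonglongrightarrow> A"
    and "\<And>m. (\<lambda>n. \<phi> m (b n)) \<longlonglongrightarrow> c m" "c \<longlonglongrightarrow> C"
  shows "A = C"
proof -
  obtain \<sigma> where \<sigma>: "strict_mono \<sigma>" "\<forall>s\<in>S. convergent (\<lambda>i. f (\<sigma> i) s)"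
    using exists_subseq_convergent_on_S by blast
  show ?thesis
  proof (rule double_limits_eq_if_uniformly_Cauchy[where g = "\<lambda>i n. \<phi> (\<sigma> i) (b n)"])
    show "(\<lambda>i. \<phi> (\<sigma> i) (b n)) \<longlonglongrightarrow> a n" for n
      using LIMSEQ_subseq_LIMSEQ[OF assms(1) \<sigma>(1)] by (simp add: o_def)
    show "(\<lambda>i. c (\<sigma> i)) \<longlonglongrightarrow> C"
      using LIMSEQ_subseq_LIMSEQ[OF assms(4) \<sigma>(1)] by (simp add: o_def)
  qed (use assms(2,3) \<sigma>(2) subseq_uniformly_Cauchy in auto)
qed

end

lemma Ltop_double_limits_eq:
  assumes B: "bounded_in (Ltop X) B"
    and M: "M \<subseteq> cdual (Ltop X)" "equicontinuous_on (Ltop X) M"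
    and in_M: "\<And>m. \<phi> m \<in> M" and in_B: "\<And>n. b n \<in> B"
    and "\<And>n. (\<lambda>m. \<phi> m (b n)) \<longlonglongrightarrow> a n" "a \<longlonglongrightarrow> A"
    and "\<And>m. (\<lambda>n. \<phi> m (b n)) \<longlonglongrightarrow> c m" "c \<longlonglongrightarrow> C"
  shows "A = C"
proof -
  obtain q where q: "admissible_seminorm X q" "\<forall>\<psi>\<in>M. \<forall>w\<in>Lcarrier X. \<bar>\<psi> w\<bar> \<le> q w"
    using equicontinuous_imp_dominated[OF M] by blast
  have \<phi>: "\<phi> m \<in> cdual (Ltop X)" for m
    using M(1) in_M by blast
  interpret dominated_sequence X q \<phi> b
  proof
    show "b n \<in> Lcarrier X" for n
      using B in_B unfolding bounded_in_def topspace_Ltop by blast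
    show "\<exists>R. \<forall>n. p (b n) \<le> R" if "admissible_seminorm X p" for p
      using bounded_in_Ltop_imp_seminorm_bounded[OF B that] in_B by blast
  qed (use q in_M cdual_Ltop_linear[OF \<phi>] in auto)
  show ?thesis
    using double_limits_eq assms by blast
qed

theorem theorem7p6:
  fixes X :: "'a topology"
  assumes "Tychonoff_space X"
  shows "DLP_space (Ltop X)"
  unfolding DLP_space_def DLP_family_def
proof (intro allI impI, elim conjE)
  fix B M a A c C and F :: "nat \<Rightarrow> (('a \<Rightarrow> real) \<Rightarrow> real) \<Rightarrow> real" and \<phi>
  assume B: "bounded_in (Ltop X) B" and M: "M \<subseteq> cdual (Ltop X)" "equicontinuous_on (Ltop X) M"
    and F: "\<forall>n. F n \<in> (\<lambda>b \<phi>. \<phi> b) ` B" and "\<forall>m. \<phi> m \<in> M"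
    and "\<forall>n. (\<lambda>m. F n (\<phi> m)) \<longlonglongrightarrow> a n" "a \<longlonglongrightarrow> A"
    and "\<forall>m. (\<lambda>n. F n (\<phi> m)) \<longlonglongrightarrow> c m" "c \<longlonglongrightarrow> C"
  moreover obtain b where "\<forall>n. b n \<in> B \<and> F n = (\<lambda>\<phi>. \<phi> (b n))"
    using F by (simp add: image_iff) metis
  ultimately show "A = C"
    by (intro Ltop_double_limits_eq[OF B M, of \<phi> b a A c C]) auto
qed

end
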